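(* For every integer $t\ge0$, \begin{align*} \kappa_2(2t+1)&=\tfrac{\kappa_2(t)+\kappa_2(t+1)}2+1;\\ \kappa_3(2t+1)&=\tfrac{\kappa_3(t)+\kappa_3(t+1)}2+\tfrac32\bigl(\kappa_2(t)-\kappa_2(t+1)\bigr);\\ \kappa_4(2t+1)&=\tfrac{\kappa_4(t)+\kappa_4(t+1)}2+2\bigl(\kappa_3(t)-\kappa_3(t+1)\bigr)+\tfrac34\bigl(\kappa_2(t)-\kappa_2(t+1)\bigr)^2-2;\\ \kappa_5(2t+1)&=\tfrac{\kappa_5(t)+\kappa_5(t+1)}2+\tfrac52\bigl(\kappa_4(t)-\kappa_4(t+1)\bigr)+\tfrac52\bigl(\kappa_2(t)-\kappa_2(t+1)\bigr)\bigl(\kappa_3(t)-\kappa_3(t+1)\bigr)-10\bigl(\kappa_2(t)-\kappa_2(t+1)\bigr). \end{align*} In particular, $\kappa_2(1)=2$, $\kappa_3(1)=-6$, $\kappa_4(1)=26$, $\kappa_5(1)=-150$.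
   Context: $s(n)$ is the number of $1$s in the binary expansion of $n\ge0$. For integers $j$ and $t\ge0$, $\delta(j,t)=\lim_{N\to\infty}\frac1N|\{0\le n<N: s(n+t)-s(n)=j\}|$; for each $t$ these form a probability distribution on $\mathbb Z$ with finite support bounded above and exponentially decaying tail. Let $\gamma_t(\vartheta)=\sum_{j\in\mathbb Z}\delta(j,t)e^{2\pi i j\vartheta}$. The cumulants $\kappa_j(t)$ ($j\ge0$) are the real numbers defined by $\log\gamma_t(\vartheta)=\sum_{j\ge0}\frac{\kappa_j(t)}{j!}(2\pi i\vartheta)^j$ for complex $\vartheta$ in a neighbourhood of $0$ (i.e. the cumulants of the distribution $\delta(\cdot,t)$); in particular $\kappa_j(0)=0$ for all $j$. *)

theory Defs
  imports "HOL-Analysis.Analysis"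
begin

fun bsum :: "nat \<Rightarrow> nat" where
  "bsum n = (if n = 0 then 0 else n mod 2 + bsum (n div 2))"

definition delta :: "int \<Rightarrow> nat \<Rightarrow> real" where
  "delta j t = lim (\<lambda>N. real (card {n. n < N \<and> int (bsum (n + t)) - int (bsum n) = j}) / real N)"

definition gamma_t :: "nat \<Rightarrow> complex \<Rightarrow> complex" where
  "gamma_t t \<theta> = (\<Sum>\<^sub>\<infinity> j\<in>(UNIV::int set). complex_of_real (delta j t) * exp (2 * complex_of_real pi * \<i> * of_int j * \<theta>))"

text \<open>The cumulant sequence: the real numbers kappa_j(t) with
  log gamma_t(theta) = sum_j kappa_j(t)/j! (2 pi i theta)^j for theta in a neighbourhood of 0
  (log = principal branch Ln, which is the branch with log gamma_t(0) = log 1 = 0).\<close>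
definition cumulants :: "nat \<Rightarrow> nat \<Rightarrow> real" where
  "cumulants t = (SOME \<kappa>. \<exists>e>0. \<forall>\<theta>. cmod \<theta> < e \<longrightarrow>
      ((\<lambda>j. complex_of_real (\<kappa> j) / of_nat (fact j) * (2 * complex_of_real pi * \<i> * \<theta>) ^ j)
         sums Ln (gamma_t t \<theta>)))"

definition kappa :: "nat \<Rightarrow> nat \<Rightarrow> real" where
  "kappa j t = cumulants t j"

end

(*
  Splitting n < N by parity, s(2m) = s(m) and s(2m+1) = s(m) + 1 give
  delta(j,2u) = delta(j,u) and delta(j,2u+1) = (delta(j-1,u) + delta(j+1,u+1))/2, and
  delta(j,1) = 2^(j-2) for j <= 1. Hence the generating functions
  M_t(w) = sum_j delta(j,t) e^(jw), for which gamma_t(theta) = M_t(2 pi i theta), satisfy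
  M_(2u) = M_u and M_(2u+1) = (e^w M_u + e^(-w) M_(u+1))/2 near 0, with M_1 = e^w/(2 - e^(-w)).
  The cumulants are the Taylor coefficients of log M_t at 0 (real, since M_t is positive
  on the real axis near 0). Writing M_t = exp K_t as formal power series, with
  kappa_0 = kappa_1 = 0, and comparing the coefficients of w^2, ..., w^5 on both sides of
  the odd recursion gives the four identities; at t = 0 all cumulants vanish, which
  determines kappa_j(1).
*)
theory Submission
  imports Defs "HOL-Complex_Analysis.Complex_Analysis"
begin

section \<open>Binary digit sums and the densities\<close>

lemma bsum_0 [simp]: "bsum 0 = 0"
  by simp

lemma bsum_double [simp]: "bsum (2 * m) = bsum m"
  by (cases "m = 0") simp_all

lemma bsum_double_plus_one [simp]: "bsum (Suc (2 * m)) = Suc (bsum m)"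
  by simp

declare bsum.simps [simp del]

lemma bsum_Suc_le: "bsum (Suc n) \<le> Suc (bsum n)"
proof (induction n rule: nat_bit_induct)
  case (odd m)
  have "bsum (Suc (Suc (2 * m))) = bsum (Suc m)"
    using bsum_double[of "Suc m"] by simp
  with odd show ?case
    by simp
next
  case zero
  show ?case
    using bsum_double_plus_one[of 0] by simp
qed simp

lemma binary_strong_induct [case_names zero one even odd]:
  fixes t :: nat
  assumes "P 0" "P 1"
    and "\<And>u. u \<ge> 1 \<Longrightarrow> P u \<Longrightarrow> P (2 * u)"
    and "\<And>u. u \<ge> 1 \<Longrightarrow> P u \<Longrightarrow> P (u + 1) \<Longrightarrow> P (2 * u + 1)"
  shows "P t"
proof (induction t rule: less_induct)
  case (less t)
  consider "t = 0" | "t = 1" | u where "t = 2 * u" "u \<ge> 1" | u where "t = 2 * u + 1" "u \<ge> 1"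
    by (metis One_nat_def add_0 dvd_mult_div_cancel less_one mult_0_right not_le oddE)
  then show ?case
    by cases (use assms less in auto)
qed

lemma card_less_split_parity:
  fixes N :: nat
  shows "card {n. n < N \<and> P n} =
    card {m. m < (N + 1) div 2 \<and> P (2 * m)} + card {m. m < N div 2 \<and> P (Suc (2 * m))}"
    (is "_ = card ?E + card ?O")
proof -
  have "{n. n < N \<and> P n} = (\<lambda>m. 2 * m) ` ?E \<union> (\<lambda>m. Suc (2 * m)) ` ?O"
  proof (intro set_eqI iffI)
    fix n
    assume "n \<in> {n. n < N \<and> P n}"
    then show "n \<in> (\<lambda>m. 2 * m) ` ?E \<union> (\<lambda>m. Suc (2 * m)) ` ?O"
      by (cases "even n") (auto elim!: evenE oddE)
  qed auto
  moreover have "(\<lambda>m. 2 * m) ` A \<inter> (\<lambda>m. Suc (2 * m)) ` B = {}" for A B :: "nat set"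
    by auto presburger
  ultimately show ?thesis
    by (simp add: card_Un_disjoint card_image inj_on_def)
qed

definition count_diff :: "int \<Rightarrow> nat \<Rightarrow> nat \<Rightarrow> nat" where
  "count_diff j t N = card {n. n < N \<and> int (bsum (n + t)) - int (bsum n) = j}"

lemma count_diff_0: "count_diff j 0 N = (if j = 0 then N else 0)"
  by (simp add: count_diff_def)

lemma count_diff_double:
  "count_diff j (2 * u) N = count_diff j u ((N + 1) div 2) + count_diff j u (N div 2)"
proof -
  have "2 * m + 2 * u = 2 * (m + u)" "Suc (2 * m) + 2 * u = Suc (2 * (m + u))" for m
    by simp_all
  then show ?thesis
    unfolding count_diff_def card_less_split_parity[where N = N]
    by (simp only: bsum_double bsum_double_plus_one) simp
qed

lemma count_diff_double_plus_one:
  "count_diff j (2 * u + 1) N = count_diff (j - 1) u ((N + 1) div 2) + count_diff (j + 1) (u + 1) (N div 2)"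
proof -
  have "2 * m + (2 * u + 1) = Suc (2 * (m + u))" "Suc (2 * m) + (2 * u + 1) = 2 * (m + (u + 1))" for m
    by simp_all
  then show ?thesis
    unfolding count_diff_def card_less_split_parity[where N = N]
    by (simp only: bsum_double bsum_double_plus_one) (simp add: algebra_simps)
qed

lemma count_diff_1_eq_0:
  assumes "j \<ge> 2"
  shows "count_diff j 1 N = 0"
proof -
  have "int (bsum (n + 1)) - int (bsum n) \<noteq> j" for n
    using bsum_Suc_le[of n] assms by simp
  then show ?thesis
    by (simp add: count_diff_def)
qed

lemma LIMSEQ_halved_index:
  fixes a :: "nat \<Rightarrow> real" and g :: "nat \<Rightarrow> nat"
  assumes a: "(\<lambda>N. a N / real N) \<longlonglongrightarrow> L"
    and g: "\<And>N. \<bar>real (g N) - real N / 2\<bar> \<le> 1"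
  shows "(\<lambda>N. a (g N) / real N) \<longlonglongrightarrow> L / 2"
proof -
  have g_at_top: "filterlim g sequentially sequentially"
    unfolding filterlim_at_top eventually_sequentially
  proof (intro allI exI impI)
    fix b N :: nat
    assume "2 * b + 2 \<le> N"
    with g[of N] show "b \<le> g N"
      by linarith
  qed
  have "(\<lambda>N. real (g N) / real N - 1 / 2) \<longlonglongrightarrow> 0"
  proof (rule Lim_null_comparison)
    show "\<forall>\<^sub>F N in sequentially. norm (real (g N) / real N - 1 / 2) \<le> 1 / real N"
      unfolding eventually_sequentially
    proof (intro exI allI impI)
      fix N :: nat
      assume "1 \<le> N"
      then have "norm (real (g N) / real N - 1 / 2) = \<bar>real (g N) - real N / 2\<bar> / real N"
        by (simp add: field_simps)
      also have "\<dots> \<le> 1 / real N"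
        using g[of N] by (simp add: divide_right_mono)
      finally show "norm (real (g N) / real N - 1 / 2) \<le> 1 / real N" .
    qed
  qed (rule lim_inverse_n')
  then have "(\<lambda>N. real (g N) / real N) \<longlonglongrightarrow> 1 / 2"
    by (simp add: Lim_null[symmetric])
  with filterlim_compose[OF a g_at_top]
  have "(\<lambda>N. a (g N) / real (g N) * (real (g N) / real N)) \<longlonglongrightarrow> L * (1 / 2)"
    by (intro tendsto_mult) simp_all
  moreover have "\<forall>\<^sub>F N in sequentially. a (g N) / real (g N) * (real (g N) / real N) = a (g N) / real N"
  proof -
    have "\<forall>\<^sub>F N in sequentially. g N > 0"
      using g_at_top eventually_gt_at_top filterlim_iff by blast
    then show ?thesis
      by eventually_elim simp
  qed
  ultimately show ?thesis
    by (simp add: Lim_transform_eventually)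
qed

lemma LIMSEQ_parity_split:
  fixes a b :: "nat \<Rightarrow> nat"
  assumes "(\<lambda>N. real (a N) / real N) \<longlonglongrightarrow> A" "(\<lambda>N. real (b N) / real N) \<longlonglongrightarrow> B"
  shows "(\<lambda>N. real (a ((N + 1) div 2) + b (N div 2)) / real N) \<longlonglongrightarrow> (A + B) / 2"
proof -
  have "\<bar>real (N div 2) - real N / 2\<bar> \<le> 1" for N :: nat
    by linarith
  moreover have "\<bar>real ((N + 1) div 2) - real N / 2\<bar> \<le> 1" for N :: nat
    by linarith
  ultimately have "(\<lambda>N. real (a ((N + 1) div 2)) / real N + real (b (N div 2)) / real N)
      \<longlonglongrightarrow> A / 2 + B / 2"
    by (intro tendsto_add LIMSEQ_halved_index[OF assms(1)] LIMSEQ_halved_index[OF assms(2)])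
  then show ?thesis
    by (simp add: add_divide_distrib)
qed

lemma LIMSEQ_count_diff_0:
  "(\<lambda>N. real (count_diff j 0 N) / real N) \<longlonglongrightarrow> (if j = 0 then 1 else 0)"
proof -
  have "\<forall>\<^sub>F N in sequentially. (if j = 0 then 1 else 0) = real (count_diff j 0 N) / real N"
    using eventually_gt_at_top[of 0] by eventually_elim (simp add: count_diff_0)
  then show ?thesis
    by (rule Lim_transform_eventually[OF tendsto_const])
qed

lemma LIMSEQ_count_diff_1:
  "(\<lambda>N. real (count_diff j 1 N) / real N) \<longlonglongrightarrow> (if j \<le> 1 then (1 / 2) ^ nat (2 - j) else 0)"
proof (cases "j \<le> 1")
  case True
  have "(\<lambda>N. real (count_diff (1 - int k) 1 N) / real N) \<longlonglongrightarrow> (1 / 2) ^ Suc k" for k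
  proof (induction k)
    case 0
    have "(\<lambda>N. real (count_diff 2 1 N) / real N) \<longlonglongrightarrow> 0"
      using count_diff_1_eq_0[of 2] by simp
    from LIMSEQ_parity_split[OF LIMSEQ_count_diff_0[of 0] this]
    show ?case
      using count_diff_double_plus_one[of 1 0] by simp
  next
    case (Suc k)
    have "(\<lambda>N. real (count_diff (- int k - 1) 0 ((N + 1) div 2) + count_diff (1 - int k) 1 (N div 2)) / real N)
        \<longlonglongrightarrow> (0 + (1 / 2) ^ Suc k) / 2"
      using LIMSEQ_count_diff_0[of "- int k - 1"] Suc by (intro LIMSEQ_parity_split) simp_all
    then show ?case
      using count_diff_double_plus_one[of "- int k" 0] by (simp add: algebra_simps)
  qed
  from this[of "nat (1 - j)"] True show ?thesis
    by (simp add: Suc_nat_eq_nat_zadd1)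
next
  case False
  then show ?thesis
    using count_diff_1_eq_0[of j] by simp
qed

lemma convergent_count_diff_density: "convergent (\<lambda>N. real (count_diff j t N) / real N)"
proof (induction t arbitrary: j rule: binary_strong_induct)
  case zero
  then show ?case
    using LIMSEQ_count_diff_0 by (auto simp: convergent_def)
next
  case one
  then show ?case
    using LIMSEQ_count_diff_1 by (auto simp: convergent_def)
next
  case (even u)
  then show ?case
    unfolding convergent_def count_diff_double by (blast intro: LIMSEQ_parity_split)
next
  case (odd u)
  then show ?case
    unfolding convergent_def count_diff_double_plus_one by (blast intro: LIMSEQ_parity_split)
qed

lemma LIMSEQ_delta: "(\<lambda>N. real (count_diff j t N) / real N) \<longlonglongrightarrow> delta j t"
  using convergent_count_diff_density[of j t]
  by (simp add: delta_def count_diff_def convergent_LIMSEQ_iff)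

lemma delta_0: "delta j 0 = (if j = 0 then 1 else 0)"
  using LIMSEQ_unique[OF LIMSEQ_delta LIMSEQ_count_diff_0] .

lemma delta_1: "delta j 1 = (if j \<le> 1 then (1 / 2) ^ nat (2 - j) else 0)"
  using LIMSEQ_unique[OF LIMSEQ_delta LIMSEQ_count_diff_1] .

lemma delta_double: "delta j (2 * u) = delta j u"
proof -
  have "(\<lambda>N. real (count_diff j (2 * u) N) / real N) \<longlonglongrightarrow> (delta j u + delta j u) / 2"
    unfolding count_diff_double by (rule LIMSEQ_parity_split[OF LIMSEQ_delta LIMSEQ_delta])
  then show ?thesis
    using LIMSEQ_unique[OF LIMSEQ_delta] by simp
qed

lemma delta_double_plus_one: "delta j (2 * u + 1) = (delta (j - 1) u + delta (j + 1) (u + 1)) / 2"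
proof -
  have "(\<lambda>N. real (count_diff j (2 * u + 1) N) / real N)
      \<longlonglongrightarrow> (delta (j - 1) u + delta (j + 1) (u + 1)) / 2"
    unfolding count_diff_double_plus_one by (rule LIMSEQ_parity_split[OF LIMSEQ_delta LIMSEQ_delta])
  then show ?thesis
    by (rule LIMSEQ_unique[OF LIMSEQ_delta])
qed

section \<open>The generating function\<close>

(* mgf t w = sum_j delta(j,t) e^(jw) (has_sum_mgf), defined through the recursion it satisfies;
   at t = 1 the recursion reads M_1 = (e^w + e^(-w) M_1)/2, and the closed form below solves it. *)

function mgf :: "nat \<Rightarrow> complex \<Rightarrow> complex" where
  "mgf t w =
    (if t = 0 then 1
     else if t = 1 then exp w / (2 - exp (- w))
     else if even t then mgf (t div 2) w
     else (exp w * mgf (t div 2) w + exp (- w) * mgf (t div 2 + 1) w) / 2)"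
  by pat_completeness auto
termination
  by (relation "Wellfounded.measure fst") (auto elim!: oddE)

declare mgf.simps [simp del]

lemma mgf_0 [simp]: "mgf 0 w = 1"
  by (simp add: mgf.simps)

lemma mgf_1: "mgf 1 w = exp w / (2 - exp (- w))"
  by (simp add: mgf.simps)

lemma mgf_double: "mgf (2 * u) = mgf u"
  by (cases "u = 0") (auto simp: mgf.simps[of "2 * u"])

lemma norm_exp_minus_less_2:
  assumes "cmod w < ln 2"
  shows "cmod (exp (- w)) < 2"
proof -
  have "cmod (exp (- w)) \<le> exp (cmod w)"
    using norm_exp[of "- w"] by simp
  also have "\<dots> < exp (ln 2)"
    using assms by (simp only: exp_less_cancel_iff)
  finally show ?thesis
    by simp
qed

lemma exp_minus_neq_2: "cmod w < ln 2 \<Longrightarrow> exp (- w) \<noteq> 2"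
  using norm_exp_minus_less_2 by fastforce

lemma mgf_double_plus_one:
  assumes "u \<ge> 1 \<or> exp (- w) \<noteq> 2"
  shows "mgf (2 * u + 1) w = (exp w * mgf u w + exp (- w) * mgf (u + 1) w) / 2"
proof (cases "u = 0")
  case True
  have "2 - exp (- w) \<noteq> 0"
    using assms True by simp
  with True show ?thesis
    using mgf_1[of w] by (simp add: field_simps)
next
  case False
  then show ?thesis
    by (subst mgf.simps) simp
qed

lemma has_sum_delta_1:
  assumes "cmod w < ln 2"
  shows "((\<lambda>j. complex_of_real (delta j 1) * exp (of_int j * w)) has_sum mgf 1 w) UNIV"
proof -
  define q where "q = exp (- w) / 2"
  have q: "norm q < 1"
    using norm_exp_minus_less_2[OF assms] by (simp add: q_def norm_divide)
  have "((\<lambda>k. exp w / 2 * q ^ k) has_sum exp w / 2 * (1 / (1 - q))) UNIV"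
    using q by (intro norm_summable_imp_has_sum sums_mult geometric_sums)
      (simp_all add: norm_mult norm_power summable_mult summable_geometric)
  also have "exp w / 2 * (1 / (1 - q)) = mgf 1 w"
    using exp_minus_neq_2[OF assms] unfolding mgf_1 q_def by (simp add: field_simps)
  finally have geometric: "((\<lambda>k. exp w / 2 * q ^ k) has_sum mgf 1 w) UNIV" .
  have "((\<lambda>j. complex_of_real (delta j 1) * exp (of_int j * w)) has_sum mgf 1 w) {..1}"
  proof (rule has_sum_reindex_bij_witness[where i = "\<lambda>k. 1 - int k" and j = "\<lambda>j. nat (1 - j)",
        THEN iffD2, OF _ _ _ _ _ _ geometric])
    fix j :: int
    assume "j \<in> {..1}"
    define k where "k = nat (1 - j)"
    have k: "j = 1 - int k" "nat (2 - j) = Suc k"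
      using \<open>j \<in> {..1}\<close> by (simp_all add: k_def)
    have "of_int j * w = w + of_nat k * (- w)"
      unfolding k(1) by (simp add: algebra_simps)
    then have "exp (of_int j * w) = exp w * exp (- w) ^ k"
      by (simp only: exp_add exp_of_nat_mult)
    then show "exp w / 2 * q ^ nat (1 - j) = complex_of_real (delta j 1) * exp (of_int j * w)"
      unfolding delta_1 using k by (simp add: k_def[symmetric] q_def power_divide)
  qed auto
  moreover have "((\<lambda>j. complex_of_real (delta j 1) * exp (of_int j * w)) has_sum mgf 1 w) UNIV \<longleftrightarrow>
      ((\<lambda>j. complex_of_real (delta j 1) * exp (of_int j * w)) has_sum mgf 1 w) {..1}"
    unfolding delta_1 by (rule has_sum_cong_neutral) auto
  ultimately show ?thesis
    by simp
qed

lemma has_sum_int_shift: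
  fixes f :: "int \<Rightarrow> 'a::{comm_monoid_add, topological_space}"
  assumes "(f has_sum S) UNIV"
  shows "((\<lambda>j. f (j + c)) has_sum S) UNIV"
proof -
  have "bij_betw (\<lambda>j. j + c) UNIV UNIV"
    by (rule bij_betwI[where g = "\<lambda>j. j - c"]) auto
  from has_sum_reindex_bij_betw[OF this, of f S] assms show ?thesis
    by simp
qed

lemma has_sum_mgf:
  assumes w: "cmod w < ln 2"
  shows "((\<lambda>j. complex_of_real (delta j t) * exp (of_int j * w)) has_sum mgf t w) UNIV"
proof (induction t rule: binary_strong_induct)
  case zero
  have "((\<lambda>j. complex_of_real (delta j 0) * exp (of_int j * w)) has_sum 1) {0}"
    using has_sum_finite[of "{0}" "\<lambda>j. complex_of_real (delta j 0) * exp (of_int j * w)"]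
    by (simp add: delta_0)
  then show ?case
    by (subst has_sum_cong_neutral[where T = "{0}"]) (auto simp: delta_0)
next
  case one
  show ?case
    using has_sum_delta_1[OF w] .
next
  case (even u)
  then show ?case
    by (simp add: delta_double mgf_double)
next
  case (odd u)
  let ?f = "\<lambda>t j. complex_of_real (delta j t) * exp (of_int j * w)"
  have "((\<lambda>j. (exp w * ?f u (j + - 1) + exp (- w) * ?f (u + 1) (j + 1)) / 2)
      has_sum (exp w * mgf u w + exp (- w) * mgf (u + 1) w) / 2) UNIV"
    by (intro has_sum_divide_const has_sum_add has_sum_cmult_right has_sum_int_shift odd.IH)
  moreover have "(exp w * ?f u (j + - 1) + exp (- w) * ?f (u + 1) (j + 1)) / 2 = ?f (2 * u + 1) j" for j
  proof -
    have "exp w * exp (of_int (j + - 1) * w) = exp (of_int j * w)"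
      "exp (- w) * exp (of_int (j + 1) * w) = exp (of_int j * w)"
      by (simp_all add: exp_add[symmetric] algebra_simps)
    then show ?thesis
      unfolding delta_double_plus_one
      by (simp only: mult.left_commute[of "exp w"] mult.left_commute[of "exp (- w)"])
        (simp add: field_simps)
  qed
  moreover have "mgf (2 * u + 1) w = (exp w * mgf u w + exp (- w) * mgf (u + 1) w) / 2"
    using exp_minus_neq_2[OF w] by (intro mgf_double_plus_one) simp
  ultimately show ?case
    by (simp only:)
qed

lemma gamma_t_eq_mgf:
  assumes "cmod \<theta> < ln 2 / (2 * pi)"
  shows "gamma_t t \<theta> = mgf t (2 * pi * \<i> * \<theta>)"
proof -
  have w: "cmod (2 * pi * \<i> * \<theta>) < ln 2"
    using assms by (simp add: norm_mult field_simps)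
  have "2 * complex_of_real pi * \<i> * of_int j * \<theta> = of_int j * (2 * pi * \<i> * \<theta>)" for j
    by (simp add: algebra_simps)
  then show ?thesis
    unfolding gamma_t_def by (simp only:) (rule infsumI[OF has_sum_mgf[OF w]])
qed

lemma mgf_holomorphic: "mgf t holomorphic_on ball 0 (ln 2)"
proof (induction t rule: binary_strong_induct)
  case zero
  then show ?case
    by simp
next
  case one
  have "(\<lambda>w. exp w / (2 - exp (- w))) holomorphic_on ball 0 (ln 2)"
    using exp_minus_neq_2 by (intro holomorphic_intros) auto
  then show ?case
    unfolding mgf_1 .
next
  case (even u)
  then show ?case
    by (simp add: mgf_double)
next
  case (odd u)
  then have "(\<lambda>w. (exp w * mgf u w + exp (- w) * mgf (u + 1) w) / 2) holomorphic_on ball 0 (ln 2)"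
    by (intro holomorphic_intros) auto
  moreover have "mgf (2 * u + 1) = (\<lambda>w. (exp w * mgf u w + exp (- w) * mgf (u + 1) w) / 2)"
    using \<open>u \<ge> 1\<close> by (intro ext mgf_double_plus_one) simp
  ultimately show ?case
    by simp
qed

lemma mgf_at_0 [simp]: "mgf t 0 = 1"
proof (induction t rule: binary_strong_induct)
  case one
  show ?case
    unfolding mgf_1 by simp
next
  case (odd u)
  then show ?case
    by (subst mgf_double_plus_one) simp_all
qed (simp_all add: mgf_double)

lemma mgf_of_real_in_Reals: "mgf t (of_real x) \<in> \<real>"
proof (induction t rule: binary_strong_induct)
  case one
  show ?case
    unfolding mgf_1 by (simp flip: exp_of_real)
next
  case (odd u)
  then show ?case
    by (subst mgf_double_plus_one) (simp_all flip: exp_of_real)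
qed (simp_all add: mgf_double)

lemma eventually_Re_mgf_pos: "\<forall>\<^sub>F w in nhds 0. Re (mgf t w) > 0"
proof -
  have "isCont (mgf t) 0"
    using holomorphic_on_imp_continuous_on[OF mgf_holomorphic]
    by (simp add: continuous_on_eq_continuous_at)
  then have "((\<lambda>w. Re (mgf t w)) \<longlongrightarrow> 1) (at 0)"
    unfolding isCont_def using tendsto_Re by fastforce
  then have "\<forall>\<^sub>F w in at 0. Re (mgf t w) > 0"
    by (rule order_tendstoD) simp
  then show ?thesis
    by (simp add: eventually_nhds_conv_at)
qed

section \<open>Cumulants as Taylor coefficients\<close>

lemma deriv_of_real_in_Reals:
  assumes g: "g holomorphic_on ball 0 r"
    and real: "\<And>y. \<bar>y\<bar> < r \<Longrightarrow> g (complex_of_real y) \<in> \<real>"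
    and x: "\<bar>x\<bar> < r"
  shows "deriv g (complex_of_real x) \<in> \<real>"
proof -
  have "(g has_field_derivative deriv g (of_real x)) (at (of_real x))"
    using x by (intro holomorphic_derivI[OF g open_ball]) simp
  then have "((\<lambda>y. g (of_real y)) has_vector_derivative deriv g (of_real x)) (at x)"
    by (rule has_vector_derivative_real_field)
  then have "((\<lambda>y. Im (g (of_real y))) has_vector_derivative Im (deriv g (of_real x))) (at x)"
    using bounded_linear.has_vector_derivative[OF bounded_linear_Im] by fastforce
  moreover have "((\<lambda>y. Im (g (of_real y))) has_vector_derivative 0) (at x)"
  proof (rule has_vector_derivative_transform_within_open[OF has_vector_derivative_const[of 0]])
    show "open {-r<..<r}" "x \<in> {-r<..<r}"
      using x by auto
    show "0 = Im (g (of_real y))" if "y \<in> {-r<..<r}" for y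
      using real[of y] that by (simp add: complex_is_Real_iff abs_less_iff)
  qed
  ultimately have "Im (deriv g (of_real x)) = 0"
    by (rule vector_derivative_unique_at)
  then show ?thesis
    by (simp add: complex_is_Real_iff)
qed

lemma higher_deriv_of_real_in_Reals:
  assumes "g holomorphic_on ball 0 r" "\<And>y. \<bar>y\<bar> < r \<Longrightarrow> g (complex_of_real y) \<in> \<real>" "\<bar>x\<bar> < r"
  shows "(deriv ^^ n) g (complex_of_real x) \<in> \<real>"
  using assms
proof (induction n arbitrary: g x)
  case (Suc n)
  have "(deriv ^^ n) (deriv g) (of_real x) \<in> \<real>"
    using Suc.prems deriv_of_real_in_Reals[OF Suc.prems(1,2)]
    by (intro Suc.IH[OF holomorphic_deriv[OF _ open_ball]]) auto
  then show ?case
    by (simp add: funpow_Suc_right del: funpow.simps)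
qed simp

lemma log_mgf_holomorphic_real_derivs:
  obtains r where "0 < r" "r \<le> ln 2" "(\<lambda>w. Ln (mgf t w)) holomorphic_on ball 0 r"
    "\<And>n. (deriv ^^ n) (\<lambda>w. Ln (mgf t w)) 0 \<in> \<real>"
proof -
  obtain r0 where "r0 > 0" and Re_pos0: "\<And>w. dist w 0 < r0 \<Longrightarrow> Re (mgf t w) > 0"
    using eventually_Re_mgf_pos[of t] unfolding eventually_nhds_metric by blast
  define r where "r = min r0 (ln 2)"
  have r: "0 < r" "r \<le> ln 2"
    using \<open>r0 > 0\<close> by (simp_all add: r_def)
  have Re_pos: "Re (mgf t w) > 0" if "w \<in> ball 0 r" for w
    using that Re_pos0[of w] by (simp add: r_def dist_norm)
  have "mgf t w \<notin> \<real>\<^sub>\<le>\<^sub>0" if "w \<in> ball 0 r" for w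
    using Re_pos[OF that] by (auto simp: complex_nonpos_Reals_iff)
  then have holomorphic: "(\<lambda>w. Ln (mgf t w)) holomorphic_on ball 0 r"
    using r(2) by (intro holomorphic_on_Ln' holomorphic_on_subset[OF mgf_holomorphic]) auto
  have "Ln (mgf t (of_real y)) \<in> \<real>" if "\<bar>y\<bar> < r" for y
  proof -
    obtain p where p: "mgf t (of_real y) = of_real p"
      using mgf_of_real_in_Reals by (metis Reals_cases)
    moreover have "p > 0"
      using Re_pos[of "of_real y"] that p by simp
    ultimately show ?thesis
      by (simp add: Ln_of_real)
  qed
  with holomorphic r have "(deriv ^^ n) (\<lambda>w. Ln (mgf t w)) 0 \<in> \<real>" for n
    using higher_deriv_of_real_in_Reals[OF holomorphic, of 0 n] by simp
  with r holomorphic show ?thesis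
    using that by blast
qed

lemma cumulant_sequence_exists:
  "\<exists>\<kappa>. \<exists>e>0. \<forall>\<theta>. cmod \<theta> < e \<longrightarrow>
     ((\<lambda>j. complex_of_real (\<kappa> j) / of_nat (fact j) * (2 * complex_of_real pi * \<i> * \<theta>) ^ j)
        sums Ln (gamma_t t \<theta>))"
proof -
  obtain r where r: "0 < r" "r \<le> ln 2" and holomorphic: "(\<lambda>w. Ln (mgf t w)) holomorphic_on ball 0 r"
    and real: "\<And>n. (deriv ^^ n) (\<lambda>w. Ln (mgf t w)) 0 \<in> \<real>"
    using log_mgf_holomorphic_real_derivs[of t] by blast
  show ?thesis
  proof (intro exI conjI allI impI)
    show "r / (2 * pi) > 0"
      using r by simp
    fix \<theta> :: complex
    assume "cmod \<theta> < r / (2 * pi)"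
    then have "2 * complex_of_real pi * \<i> * \<theta> \<in> ball 0 r" "cmod \<theta> < ln 2 / (2 * pi)"
      using r(2) by (auto simp: norm_mult field_simps)
    then show "(\<lambda>n. complex_of_real (Re ((deriv ^^ n) (\<lambda>w. Ln (mgf t w)) 0)) / of_nat (fact n)
        * (2 * complex_of_real pi * \<i> * \<theta>) ^ n) sums Ln (gamma_t t \<theta>)"
      using holomorphic_power_series[OF holomorphic] real by (simp add: gamma_t_eq_mgf)
  qed
qed

lemma cumulants_sums:
  "\<exists>e>0. \<forall>\<theta>. cmod \<theta> < e \<longrightarrow>
     ((\<lambda>j. complex_of_real (cumulants t j) / of_nat (fact j) * (2 * complex_of_real pi * \<i> * \<theta>) ^ j)
        sums Ln (gamma_t t \<theta>))"
  unfolding cumulants_def by (rule someI_ex[OF cumulant_sequence_exists])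

definition cumulant_fps :: "nat \<Rightarrow> complex fps" where
  "cumulant_fps t = Abs_fps (\<lambda>n. complex_of_real (cumulants t n) / fact n)"

lemma fps_nth_cumulant_fps [simp]: "cumulant_fps t $ n = complex_of_real (cumulants t n) / fact n"
  by (simp add: cumulant_fps_def)

lemma log_mgf_has_fps_expansion: "(\<lambda>w. Ln (mgf t w)) has_fps_expansion cumulant_fps t"
proof (rule has_fps_expansionI)
  obtain e where e: "e > 0" and sums: "\<And>\<theta>. cmod \<theta> < e \<Longrightarrow>
      (\<lambda>j. complex_of_real (cumulants t j) / of_nat (fact j) * (2 * complex_of_real pi * \<i> * \<theta>) ^ j)
        sums Ln (gamma_t t \<theta>)"
    using cumulants_sums by blast
  have "\<forall>\<^sub>F w in nhds 0. w \<in> ball 0 (min (2 * pi * e) (ln 2))"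
    using e by (intro eventually_nhds_in_open) auto
  then show "\<forall>\<^sub>F w in nhds 0. (\<lambda>n. fps_nth (cumulant_fps t) n * w ^ n) sums Ln (mgf t w)"
  proof eventually_elim
    case (elim w)
    define \<theta> where "\<theta> = w / (2 * pi * \<i>)"
    have w: "w = 2 * complex_of_real pi * \<i> * \<theta>"
      by (simp add: \<theta>_def)
    have "cmod \<theta> = cmod w / (2 * pi)"
      by (simp add: \<theta>_def norm_divide norm_mult)
    with elim have "cmod \<theta> < e" "cmod \<theta> < ln 2 / (2 * pi)"
      by (simp_all add: pos_divide_less_eq divide_strict_right_mono mult.commute)
    with sums[of \<theta>] show ?case
      by (simp add: cumulant_fps_def gamma_t_eq_mgf w of_nat_fact)
  qed
qed

lemma zeroth_cumulant: "cumulants t 0 = 0"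
  using has_fps_expansion_imp_0_eq_fps_nth_0[OF log_mgf_has_fps_expansion[of t]] by simp

lemma cumulants_eqI:
  assumes "mgf t = mgf t'"
  shows "cumulants t = cumulants t'"
proof
  fix n
  have "cumulant_fps t = cumulant_fps t'"
    using log_mgf_has_fps_expansion[of t] log_mgf_has_fps_expansion[of t'] assms
    by (simp add: fps_expansion_unique_complex)
  from arg_cong[OF this, of "\<lambda>F. fps_nth F n"] show "cumulants t n = cumulants t' n"
    by simp
qed

lemma cumulants_double: "cumulants (2 * u) = cumulants u"
  by (rule cumulants_eqI) (rule mgf_double)

lemma cumulants_at_0: "cumulants 0 n = 0"
proof -
  have "(\<lambda>w. Ln (mgf 0 w)) has_fps_expansion 0"
    by simp
  from fps_expansion_unique_complex[OF log_mgf_has_fps_expansion this]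
  have "cumulant_fps 0 = 0" .
  from arg_cong[OF this, of "\<lambda>F. fps_nth F n"] show ?thesis
    by simp
qed

definition moment_fps :: "nat \<Rightarrow> complex fps" where
  "moment_fps t = fps_exp 1 oo cumulant_fps t"

lemma mgf_has_fps_expansion: "mgf t has_fps_expansion moment_fps t"
proof -
  have "(exp \<circ> (\<lambda>w. Ln (mgf t w))) has_fps_expansion moment_fps t"
    unfolding moment_fps_def
    by (intro has_fps_expansion_compose has_fps_expansion_exp1 log_mgf_has_fps_expansion)
      (simp add: zeroth_cumulant)
  moreover have "\<forall>\<^sub>F w in nhds 0. (exp \<circ> (\<lambda>w. Ln (mgf t w))) w = mgf t w"
    using eventually_Re_mgf_pos[of t]
  proof eventually_elim
    case (elim w)
    then have "mgf t w \<noteq> 0"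
      by auto
    then show ?case
      by simp
  qed
  ultimately show ?thesis
    using has_fps_expansion_cong by blast
qed

lemma moment_fps_double_plus_one:
  "moment_fps (2 * t + 1) = fps_const (1 / 2) * (fps_exp 1 * moment_fps t + fps_exp (- 1) * moment_fps (t + 1))"
    (is "_ = ?M")
proof -
  have "\<forall>\<^sub>F w in nhds 0. w \<in> ball 0 (ln 2)"
    by (intro eventually_nhds_in_open) auto
  then have "\<forall>\<^sub>F w in nhds 0. 1 / 2 * (exp w * mgf t w + exp (- w) * mgf (t + 1) w) = mgf (2 * t + 1) w"
  proof eventually_elim
    case (elim w)
    then show ?case
      using exp_minus_neq_2[of w] by (subst mgf_double_plus_one) auto
  qed
  then have "(\<lambda>w. 1 / 2 * (exp w * mgf t w + exp (- w) * mgf (t + 1) w)) has_fps_expansion ?M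
      \<longleftrightarrow> mgf (2 * t + 1) has_fps_expansion ?M"
    by (rule has_fps_expansion_cong) (rule refl)
  moreover have "(\<lambda>w. 1 / 2 * (exp w * mgf t w + exp (- w) * mgf (t + 1) w)) has_fps_expansion ?M"
    by (intro fps_expansion_intros mgf_has_fps_expansion)
  ultimately show ?thesis
    using fps_expansion_unique_complex[OF mgf_has_fps_expansion] by blast
qed

lemma moment_fps_double_plus_one_nth:
  "moment_fps (2 * t + 1) $ n =
    (\<Sum>i=0..n. (moment_fps t $ (n - i) + (- 1) ^ i * moment_fps (t + 1) $ (n - i)) / fact i) / 2"
  unfolding moment_fps_double_plus_one
  by (simp only: fps_mult_left_const_nth, simp only: fps_add_nth fps_mult_nth fps_exp_nth)
    (simp add: sum.distrib add_divide_distrib mult.commute)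

section \<open>Recurrences for the cumulants\<close>

lemma fps_exp_compose_nth_Suc:
  fixes K :: "'a::field_char_0 fps"
  assumes "K $ 0 = 0"
  shows "(fps_exp 1 oo K) $ Suc n =
    (\<Sum>i=0..n. of_nat (Suc i) * K $ Suc i * (fps_exp 1 oo K) $ (n - i)) / of_nat (Suc n)"
proof -
  have "fps_deriv (fps_exp 1 oo K) = (fps_exp 1 oo K) * fps_deriv K"
    using fps_compose_deriv[OF assms, of "fps_exp 1"] by simp
  from arg_cong[OF this, of "\<lambda>F. fps_nth F n"] show ?thesis
    by (simp add: fps_mult_nth field_simps mult.assoc del: of_nat_Suc)
qed

lemma fps_exp_compose_nth_1:
  fixes K :: "'a::field_char_0 fps"
  assumes "K $ 0 = 0"
  shows "(fps_exp 1 oo K) $ 1 = K $ 1"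
  using fps_exp_compose_nth_Suc[OF assms, of 0] by simp

lemma fps_exp_compose_nth_2_to_5:
  fixes K :: "'a::field_char_0 fps"
  assumes K0: "K $ 0 = 0" and K1: "K $ 1 = 0"
  shows "(fps_exp 1 oo K) $ 2 = K $ 2"
    and "(fps_exp 1 oo K) $ 3 = K $ 3"
    and "(fps_exp 1 oo K) $ 4 = K $ 4 + (K $ 2)\<^sup>2 / 2"
    and "(fps_exp 1 oo K) $ 5 = K $ 5 + K $ 2 * K $ 3"
proof -
  note rec = fps_exp_compose_nth_Suc[OF K0]
  have K1': "K $ Suc 0 = 0"
    using K1 by simp
  show "(fps_exp 1 oo K) $ 2 = K $ 2"
    by (simp add: rec K1' numeral_2_eq_2)
  show "(fps_exp 1 oo K) $ 3 = K $ 3"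
    by (simp add: rec K1' eval_nat_numeral)
  show "(fps_exp 1 oo K) $ 4 = K $ 4 + (K $ 2)\<^sup>2 / 2"
    by (simp add: rec K1' eval_nat_numeral field_simps power2_eq_square)
  show "(fps_exp 1 oo K) $ 5 = K $ 5 + K $ 2 * K $ 3"
    by (simp add: rec K1' eval_nat_numeral field_simps)
qed

lemma moment_fps_nth_0 [simp]: "moment_fps t $ 0 = 1"
  by (simp add: moment_fps_def)

lemma moment_fps_nth_1: "moment_fps t $ 1 = complex_of_real (cumulants t 1)"
  unfolding moment_fps_def using fps_exp_compose_nth_1[of "cumulant_fps t"] by (simp add: zeroth_cumulant)

lemma first_cumulant: "cumulants t 1 = 0"
proof -
  have double_plus_one: "cumulants (2 * u + 1) 1 = (cumulants u 1 + cumulants (u + 1) 1) / 2" for u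
  proof -
    have "complex_of_real (cumulants (2 * u + 1) 1) = complex_of_real ((cumulants u 1 + cumulants (u + 1) 1) / 2)"
      using moment_fps_double_plus_one_nth[of u 1] moment_fps_nth_1[of "2 * u + 1"]
        moment_fps_nth_1[of u] moment_fps_nth_1[of "u + 1"]
      by simp
    then show ?thesis
      by (simp only: of_real_eq_iff)
  qed
  show ?thesis
  proof (induction t rule: binary_strong_induct)
    case zero
    then show ?case
      by (simp add: cumulants_at_0)
  next
    case one
    then show ?case
      using double_plus_one[of 0] by (simp add: cumulants_at_0)
  next
    case (even u)
    then show ?case
      by (simp add: cumulants_double)
  next
    case (odd u)
    then show ?case
      using double_plus_one[of u] by simp
  qed
qed

lemma moment_fps_nth_2_to_5:
  "moment_fps t $ 2 = complex_of_real (cumulants t 2) / 2"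
  "moment_fps t $ 3 = complex_of_real (cumulants t 3) / 6"
  "moment_fps t $ 4 = complex_of_real (cumulants t 4) / 24 + (complex_of_real (cumulants t 2))\<^sup>2 / 8"
  "moment_fps t $ 5 = complex_of_real (cumulants t 5) / 120
     + complex_of_real (cumulants t 2) * complex_of_real (cumulants t 3) / 12"
proof -
  have "cumulant_fps t $ 0 = 0" "cumulant_fps t $ 1 = 0"
    using zeroth_cumulant first_cumulant by simp_all
  note nth = fps_exp_compose_nth_2_to_5[OF this, folded moment_fps_def]
  show "moment_fps t $ 2 = complex_of_real (cumulants t 2) / 2"
    "moment_fps t $ 3 = complex_of_real (cumulants t 3) / 6"
    "moment_fps t $ 4 = complex_of_real (cumulants t 4) / 24 + (complex_of_real (cumulants t 2))\<^sup>2 / 8"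
    "moment_fps t $ 5 = complex_of_real (cumulants t 5) / 120
       + complex_of_real (cumulants t 2) * complex_of_real (cumulants t 3) / 12"
    using nth by (simp_all add: fact_numeral power_divide)
qed

lemma cumulant_2_double_plus_one:
  "cumulants (2 * t + 1) 2 = (cumulants t 2 + cumulants (t + 1) 2) / 2 + 1"
proof -
  have "complex_of_real (cumulants (2 * t + 1) 2) = 2 * moment_fps (2 * t + 1) $ 2"
    by (simp add: moment_fps_nth_2_to_5)
  also have "\<dots> = moment_fps t $ 2 + moment_fps (t + 1) $ 2 + moment_fps t $ 1 - moment_fps (t + 1) $ 1
      + (moment_fps t $ 0 + moment_fps (t + 1) $ 0) / 2"
    unfolding moment_fps_double_plus_one_nth by (simp add: eval_nat_numeral atLeast0_atMost_Suc field_simps)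
  also have "\<dots> = complex_of_real ((cumulants t 2 + cumulants (t + 1) 2) / 2 + 1)"
    unfolding moment_fps_nth_0 moment_fps_nth_1 moment_fps_nth_2_to_5 first_cumulant by (simp add: field_simps)
  finally show ?thesis
    by (simp only: of_real_eq_iff)
qed

lemma cumulant_3_double_plus_one:
  "cumulants (2 * t + 1) 3 = (cumulants t 3 + cumulants (t + 1) 3) / 2 + 3 / 2 * (cumulants t 2 - cumulants (t + 1) 2)"
proof -
  have "complex_of_real (cumulants (2 * t + 1) 3) = 6 * moment_fps (2 * t + 1) $ 3"
    by (simp add: moment_fps_nth_2_to_5)
  also have "\<dots> = 3 * (moment_fps t $ 3 + moment_fps (t + 1) $ 3 + moment_fps t $ 2 - moment_fps (t + 1) $ 2
      + (moment_fps t $ 1 + moment_fps (t + 1) $ 1) / 2 + (moment_fps t $ 0 - moment_fps (t + 1) $ 0) / 6)"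
    unfolding moment_fps_double_plus_one_nth by (simp add: eval_nat_numeral atLeast0_atMost_Suc field_simps)
  also have "\<dots> = complex_of_real ((cumulants t 3 + cumulants (t + 1) 3) / 2
      + 3 / 2 * (cumulants t 2 - cumulants (t + 1) 2))"
    unfolding moment_fps_nth_0 moment_fps_nth_1 moment_fps_nth_2_to_5 first_cumulant by (simp add: field_simps)
  finally show ?thesis
    by (simp only: of_real_eq_iff)
qed

lemma cumulant_4_double_plus_one:
  "cumulants (2 * t + 1) 4 = (cumulants t 4 + cumulants (t + 1) 4) / 2 + 2 * (cumulants t 3 - cumulants (t + 1) 3)
     + 3 / 4 * (cumulants t 2 - cumulants (t + 1) 2)\<^sup>2 - 2"
proof -
  have "complex_of_real (cumulants (2 * t + 1) 4) =
      24 * moment_fps (2 * t + 1) $ 4 - 3 * (complex_of_real (cumulants (2 * t + 1) 2))\<^sup>2"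
    by (simp add: moment_fps_nth_2_to_5)
  also have "\<dots> = 12 * (moment_fps t $ 4 + moment_fps (t + 1) $ 4 + moment_fps t $ 3 - moment_fps (t + 1) $ 3
      + (moment_fps t $ 2 + moment_fps (t + 1) $ 2) / 2 + (moment_fps t $ 1 - moment_fps (t + 1) $ 1) / 6
      + (moment_fps t $ 0 + moment_fps (t + 1) $ 0) / 24) - 3 * (complex_of_real (cumulants (2 * t + 1) 2))\<^sup>2"
    unfolding moment_fps_double_plus_one_nth by (simp add: eval_nat_numeral atLeast0_atMost_Suc field_simps)
  also have "\<dots> = complex_of_real ((cumulants t 4 + cumulants (t + 1) 4) / 2 + 2 * (cumulants t 3 - cumulants (t + 1) 3)
      + 3 / 4 * (cumulants t 2 - cumulants (t + 1) 2)\<^sup>2 - 2)"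
    unfolding moment_fps_nth_0 moment_fps_nth_1 moment_fps_nth_2_to_5 first_cumulant cumulant_2_double_plus_one
    by (simp add: field_simps power2_eq_square)
  finally show ?thesis
    by (simp only: of_real_eq_iff)
qed

lemma cumulant_5_double_plus_one:
  "cumulants (2 * t + 1) 5 = (cumulants t 5 + cumulants (t + 1) 5) / 2 + 5 / 2 * (cumulants t 4 - cumulants (t + 1) 4)
     + 5 / 2 * (cumulants t 2 - cumulants (t + 1) 2) * (cumulants t 3 - cumulants (t + 1) 3)
     - 10 * (cumulants t 2 - cumulants (t + 1) 2)"
proof -
  have "complex_of_real (cumulants (2 * t + 1) 5) = 120 * moment_fps (2 * t + 1) $ 5
      - 10 * complex_of_real (cumulants (2 * t + 1) 2) * complex_of_real (cumulants (2 * t + 1) 3)"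
    by (simp add: moment_fps_nth_2_to_5)
  also have "\<dots> = 60 * (moment_fps t $ 5 + moment_fps (t + 1) $ 5 + moment_fps t $ 4 - moment_fps (t + 1) $ 4
      + (moment_fps t $ 3 + moment_fps (t + 1) $ 3) / 2 + (moment_fps t $ 2 - moment_fps (t + 1) $ 2) / 6
      + (moment_fps t $ 1 + moment_fps (t + 1) $ 1) / 24 + (moment_fps t $ 0 - moment_fps (t + 1) $ 0) / 120)
      - 10 * complex_of_real (cumulants (2 * t + 1) 2) * complex_of_real (cumulants (2 * t + 1) 3)"
    unfolding moment_fps_double_plus_one_nth by (simp add: eval_nat_numeral atLeast0_atMost_Suc field_simps)
  also have "\<dots> = complex_of_real ((cumulants t 5 + cumulants (t + 1) 5) / 2 + 5 / 2 * (cumulants t 4 - cumulants (t + 1) 4)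
      + 5 / 2 * (cumulants t 2 - cumulants (t + 1) 2) * (cumulants t 3 - cumulants (t + 1) 3)
      - 10 * (cumulants t 2 - cumulants (t + 1) 2))"
    unfolding moment_fps_nth_0 moment_fps_nth_1 moment_fps_nth_2_to_5 first_cumulant
      cumulant_2_double_plus_one cumulant_3_double_plus_one
    by (simp add: field_simps power2_eq_square)
  finally show ?thesis
    by (simp only: of_real_eq_iff)
qed

theorem lemma2p1:
  shows "(\<forall>t::nat.
      kappa 2 (2*t+1) = (kappa 2 t + kappa 2 (t+1)) / 2 + 1 \<and>
      kappa 3 (2*t+1) = (kappa 3 t + kappa 3 (t+1)) / 2 + 3/2 * (kappa 2 t - kappa 2 (t+1)) \<and>
      kappa 4 (2*t+1) = (kappa 4 t + kappa 4 (t+1)) / 2 + 2 * (kappa 3 t - kappa 3 (t+1))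
                        + 3/4 * (kappa 2 t - kappa 2 (t+1))^2 - 2 \<and>
      kappa 5 (2*t+1) = (kappa 5 t + kappa 5 (t+1)) / 2 + 5/2 * (kappa 4 t - kappa 4 (t+1))
                        + 5/2 * (kappa 2 t - kappa 2 (t+1)) * (kappa 3 t - kappa 3 (t+1))
                        - 10 * (kappa 2 t - kappa 2 (t+1)))
    \<and> kappa 2 1 = 2 \<and> kappa 3 1 = -6 \<and> kappa 4 1 = 26 \<and> kappa 5 1 = -150"
proof -
  have "cumulants 1 2 = 2"
    using cumulant_2_double_plus_one[of 0] by (simp add: cumulants_at_0)
  moreover from this have "cumulants 1 3 = -6"
    using cumulant_3_double_plus_one[of 0] by (simp add: cumulants_at_0)
  moreover from calculation have "cumulants 1 4 = 26"
    using cumulant_4_double_plus_one[of 0] by (simp add: cumulants_at_0)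
  moreover from calculation have "cumulants 1 5 = -150"
    using cumulant_5_double_plus_one[of 0] by (simp add: cumulants_at_0)
  ultimately show ?thesis
    unfolding kappa_def
    using cumulant_2_double_plus_one cumulant_3_double_plus_one
      cumulant_4_double_plus_one cumulant_5_double_plus_one by blast
qed
end
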